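(* Fix integers $L\ge 2$, $D\ge 1$, class centroids $\boldsymbol\mu_1,\dots,\boldsymbol\mu_L\in\mathbb R^D$, and a diagonal covariance matrix $\mathbf C=\mathrm{diag}(C_{1,1},\dots,C_{D,D})$ with $C_{d,d}>0$. Let $\tilde{\mathcal D}\subseteq\{1,\dots,D\}$ be a nonempty set of selected feature dimensions such that the reduced centroids $\tilde{\boldsymbol\mu}_\ell$ (restrictions of $\boldsymbol\mu_\ell$ to the coordinates in $\tilde{\mathcal D}$) are pairwise distinct, and let $\tilde{\mathbf C}$ be the restriction of $\mathbf C$ to $\tilde{\mathcal D}\times\tilde{\mathcal D}$. Let $\mathcal S$ be a nonempty finite set of sensors with fixed weights $w_m\ge 0$, $\sum_{m\in\mathcal S}w_m=1$. Fix a ground-truth class $\ell_0$, relevance indicators $I_m\in\{0,1\}$ for $m\in\mathcal S$, and, for each $m$ with $I_m=0$, a class $\ell_m\neq\ell_0$. Suppose the reduced features $\tilde{\mathbf f}_m$, $m\in\mathcal S$, are independent with $\tilde{\mathbf f}_m\sim\mathcal N(\tilde{\boldsymbol\mu}_{\ell_0},\tilde{\mathbf C})$ if $I_m=1$ and $\tilde{\mathbf f}_m\sim\mathcal N(\tilde{\boldsymbol\mu}_{\ell_m},\tilde{\mathbf C})$ if $I_m=0$. Let $\tilde{\mathbf f}_{\mathsf g}=\sum_{m\in\mathcal S}w_m\tilde{\mathbf f}_m$ and let $\hat\ell\in\arg\min_{\ell} (\tilde{\mathbf f}_{\mathsf g}-\tilde{\boldsymbol\mu}_\ell)^T\tilde{\mathbf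 C}^{-1}(\tilde{\mathbf f}_{\mathsf g}-\tilde{\boldsymbol\mu}_\ell)$. Then $$\Pr(\hat\ell=\ell_0)\ \ge\ 1-(L-1)\,Q\!\left[\frac{1}{\sqrt{\eta}}\left(\frac{\sqrt{\tilde G_{\min}}}{2}-2(1-\rho)\tilde\delta_{\max}\right)\right],$$ where $\rho=\sum_{m\in\mathcal S}I_m w_m$, $\eta=\sum_{m\in\mathcal S}w_m^2$, $\tilde G_{\min}=\min_{\ell\neq\ell'}\sum_{d\in\tilde{\mathcal D}}\frac{(\mu_{\ell,d}-\mu_{\ell',d})^2}{C_{d,d}}$ and $\tilde\delta_{\max}=\max_\ell\sqrt{\sum_{d\in\tilde{\mathcal D}}\frac{\mu_{\ell,d}^2}{C_{d,d}}}$. Consequently the same lower bound holds for the accuracy averaged over a uniformly distributed $\ell_0\in\{1,\dots,L\}$ and over any distribution of the irrelevant sensors' classes $\ell_m\ne\ell_0$. *)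

theory Defs
  imports "HOL-Probability.Probability"
begin

definition Qfun :: "real \<Rightarrow> real" where
  "Qfun x = measure (density lborel std_normal_density) {x<..}"

definition gauss_diag :: "nat set \<Rightarrow> (nat \<Rightarrow> real) \<Rightarrow> (nat \<Rightarrow> real) \<Rightarrow> (nat \<Rightarrow> real) measure" where
  "gauss_diag Dt mu C = PiM Dt (\<lambda>d. density lborel (normal_density (mu d) (sqrt (C d))))"

definition mahal :: "nat set \<Rightarrow> (nat \<Rightarrow> real) \<Rightarrow> (nat \<Rightarrow> real) \<Rightarrow> (nat \<Rightarrow> real) \<Rightarrow> real" where
  "mahal Dt C x mu = (\<Sum>d\<in>Dt. (x d - mu d)^2 / C d)"

end

theory Submission
  imports Defs
begin

text \<open>
  Fix a wrong class \<open>l\<close>, put \<open>c = C\<^sup>-\<^sup>1 (\<mu>\<^sub>l - \<mu>\<^sub>l\<^sub>0)\<close> on the selected coordinates and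
  \<open>G = c\<^sup>T C c\<close>. The fused feature is at least as close to \<open>\<mu>\<^sub>l\<close> as to \<open>\<mu>\<^sub>l\<^sub>0\<close> exactly when
  the projection \<open>Y = c\<^sup>T f\<^sub>g\<close> exceeds \<open>c\<^sup>T \<mu>\<^sub>l\<^sub>0 + G / 2\<close>. Being a weighted sum of
  independent Gaussian projections, \<open>Y\<close> is Gaussian with standard deviation \<open>sqrt (\<eta> G)\<close>.
  Relevant sensors contribute exactly \<open>c\<^sup>T \<mu>\<^sub>l\<^sub>0\<close> to its mean, and by Cauchy-Schwarz each
  irrelevant sensor shifts it by at most \<open>2 sqrt G \<delta>\<^sub>m\<^sub>a\<^sub>x\<close>. With \<open>G \<ge> G\<^sub>m\<^sub>i\<^sub>n\<close> the
  standardized gap is therefore at least the argument of \<open>Q\<close>, and a union bound over the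
  \<open>L - 1\<close> wrong classes finishes the proof.
\<close>

lemma indep_vars_PiM_components:
  assumes "J \<noteq> {}" and prob: "\<And>j. j \<in> J \<Longrightarrow> prob_space (N j)"
  shows "prob_space.indep_vars (PiM J N) N (\<lambda>j x. x j) J"
proof -
  interpret P: prob_space "PiM J N" by (rule prob_space_PiM) (rule prob)
  show ?thesis
  proof (subst P.indep_vars_iff_distr_eq_PiM'[OF assms(1)])
    show "(\<lambda>x. x j) \<in> measurable (PiM J N) (N j)" if "j \<in> J" for j
      using that by simp
    have "distr (PiM J N) (PiM J N) (\<lambda>x. \<lambda>j\<in>J. x j) = distr (PiM J N) (PiM J N) (\<lambda>x. x)"
      by (rule distr_cong) (auto simp: space_PiM PiE_def extensional_restrict)
    also have "\<dots> = PiM J (\<lambda>j. distr (PiM J N) (N j) (\<lambda>x. x j))"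
      by (simp add: distr_PiM_component prob cong: PiM_cong)
    finally show "distr (PiM J N) (PiM J N) (\<lambda>x. \<lambda>j\<in>J. x j) = PiM J (\<lambda>j. distr (PiM J N) (N j) (\<lambda>x. x j))" .
  qed
qed

lemma distributed_PiM_normal_component:
  assumes "j \<in> J" and "\<And>j. j \<in> J \<Longrightarrow> \<sigma> j > 0"
  shows "distributed (PiM J (\<lambda>j. density lborel (normal_density (\<mu> j) (\<sigma> j)))) lborel
           (\<lambda>x. x j) (normal_density (\<mu> j) (\<sigma> j))"
proof -
  let ?N = "\<lambda>j. density lborel (normal_density (\<mu> j) (\<sigma> j))"
  have "distr (PiM J ?N) lborel (\<lambda>x. x j) = distr (PiM J ?N) (?N j) (\<lambda>x. x j)"
    by (rule distr_cong) auto
  also have "\<dots> = ?N j"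
    using assms by (intro distr_PiM_component prob_space_normal_density) auto
  finally show ?thesis
    using assms by (simp add: distributed_def)
qed

lemma (in prob_space) distributed_lin_comb_indep_normal:
  assumes "finite I" and "\<exists>i\<in>I. c i \<noteq> 0" and indep: "indep_vars (\<lambda>_. borel) X I"
    and \<sigma>_pos: "\<And>i. i \<in> I \<Longrightarrow> \<sigma> i > 0"
    and normal: "\<And>i. i \<in> I \<Longrightarrow> distributed M lborel (X i) (normal_density (\<mu> i) (\<sigma> i))"
  shows "distributed M lborel (\<lambda>x. \<Sum>i\<in>I. c i * X i x)
           (normal_density (\<Sum>i\<in>I. c i * \<mu> i) (sqrt (\<Sum>i\<in>I. (c i * \<sigma> i)\<^sup>2)))"
proof -
  \<comment> \<open>\<open>sum_indep_normal\<close> needs positive standard deviations, so zero coefficients are dropped.\<close>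
  define K where "K = {i\<in>I. c i \<noteq> 0}"
  have K: "finite K" "K \<noteq> {}" "K \<subseteq> I"
    using assms(1,2) by (auto simp: K_def)
  have "indep_vars (\<lambda>_. borel) (\<lambda>i x. c i * X i x) K"
    by (rule indep_vars_compose2[OF indep_vars_subset[OF indep K(3)]]) simp
  moreover have "distributed M lborel (\<lambda>x. c i * X i x) (normal_density (c i * \<mu> i) (\<bar>c i\<bar> * \<sigma> i))"
    if "i \<in> K" for i
    using normal_density_affine[OF normal, of i "c i" 0] that \<sigma>_pos by (auto simp: K_def)
  ultimately have "distributed M lborel (\<lambda>x. \<Sum>i\<in>K. c i * X i x)
      (normal_density (\<Sum>i\<in>K. c i * \<mu> i) (sqrt (\<Sum>i\<in>K. (\<bar>c i\<bar> * \<sigma> i)\<^sup>2)))"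
    using \<sigma>_pos by (intro sum_indep_normal[OF K(1,2)]) (auto simp: K_def)
  moreover have "(\<Sum>i\<in>K. g i) = (\<Sum>i\<in>I. g i)" if "\<And>i. c i = 0 \<Longrightarrow> g i = 0" for g :: "'b \<Rightarrow> real"
    using that by (intro sum.mono_neutral_left) (auto simp: K_def assms(1))
  ultimately show ?thesis
    by (simp add: power_mult_distrib)
qed

lemma distributed_gauss_diag_lin_comb:
  assumes "finite Dt" and C_pos: "\<And>d. d \<in> Dt \<Longrightarrow> C d > 0" and c: "\<exists>d\<in>Dt. c d \<noteq> 0"
  shows "distributed (gauss_diag Dt \<mu> C) lborel (\<lambda>x. \<Sum>d\<in>Dt. c d * x d)
           (normal_density (\<Sum>d\<in>Dt. c d * \<mu> d) (sqrt (\<Sum>d\<in>Dt. (c d)\<^sup>2 * C d)))"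
proof -
  let ?N = "\<lambda>d. density lborel (normal_density (\<mu> d) (sqrt (C d)))"
  interpret P: prob_space "PiM Dt ?N"
    using C_pos by (intro prob_space_PiM prob_space_normal_density) simp
  have "P.indep_vars ?N (\<lambda>d x. x d) Dt"
    using c C_pos by (intro indep_vars_PiM_components prob_space_normal_density) auto
  then have "P.indep_vars (\<lambda>_. borel) (\<lambda>d x. x d) Dt"
    by (rule P.indep_vars_compose2[where Y = "\<lambda>_ x. x"]) (simp add: measurable_ident_sets)
  then have "distributed (PiM Dt ?N) lborel (\<lambda>x. \<Sum>d\<in>Dt. c d * x d)
      (normal_density (\<Sum>d\<in>Dt. c d * \<mu> d) (sqrt (\<Sum>d\<in>Dt. (c d * sqrt (C d))\<^sup>2)))"
    using assms by (intro P.distributed_lin_comb_indep_normal distributed_PiM_normal_component) auto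
  moreover have "(\<Sum>d\<in>Dt. (c d * sqrt (C d))\<^sup>2) = (\<Sum>d\<in>Dt. (c d)\<^sup>2 * C d)"
    using C_pos by (intro sum.cong) (auto simp: power_mult_distrib less_imp_le)
  ultimately show ?thesis
    by (simp add: gauss_diag_def)
qed

lemma Qfun_eq_measure_atLeast: "Qfun t = measure (density lborel std_normal_density) {t..}"
proof -
  let ?N = "density lborel std_normal_density"
  interpret prob_space ?N by (rule prob_space_normal_density) simp
  have "emeasure ?N {t} = 0"
    by (simp add: emeasure_density nn_integral_cmult_indicator)
  then have "measure ?N {t} = 0" by (simp add: measure_def)
  moreover have "measure ?N ({t<..} \<union> {t}) = measure ?N {t<..} + measure ?N {t}"
    by (rule finite_measure_Union) auto
  moreover have "{t<..} \<union> {t} = {t..}" by auto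
  ultimately show ?thesis
    unfolding Qfun_def by simp
qed

lemma Qfun_antimono: "s \<le> t \<Longrightarrow> Qfun t \<le> Qfun s"
proof -
  assume "s \<le> t"
  interpret prob_space "density lborel std_normal_density" by (rule prob_space_normal_density) simp
  show ?thesis unfolding Qfun_def by (rule finite_measure_mono) (use \<open>s \<le> t\<close> in auto)
qed

lemma (in prob_space) prob_normal_ge_le_Qfun:
  assumes Y: "distributed M lborel Y (normal_density \<mu> \<sigma>)" and "\<sigma> > 0"
    and "t \<le> (k - \<mu>) / \<sigma>"
  shows "prob {\<omega> \<in> space M. k \<le> Y \<omega>} \<le> Qfun t"
proof -
  let ?Z = "\<lambda>\<omega>. (Y \<omega> - \<mu>) / \<sigma>"
  have Z: "distributed M lborel ?Z std_normal_density"
    using normal_standard_normal_convert[OF \<open>\<sigma> > 0\<close>] Y by simp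
  have "{\<omega> \<in> space M. k \<le> Y \<omega>} = ?Z -` {(k - \<mu>) / \<sigma>..} \<inter> space M"
    using \<open>\<sigma> > 0\<close> by (auto simp: divide_le_eq_1 field_simps)
  then have "prob {\<omega> \<in> space M. k \<le> Y \<omega>} = measure (distr M lborel ?Z) {(k - \<mu>) / \<sigma>..}"
    using Z by (subst measure_distr) (auto simp: distributed_def)
  also have "\<dots> = Qfun ((k - \<mu>) / \<sigma>)"
    using Z by (simp add: distributed_def Qfun_eq_measure_atLeast)
  also have "\<dots> \<le> Qfun t"
    by (rule Qfun_antimono) fact
  finally show ?thesis .
qed

lemma abs_sum_div_le_weighted_norms:
  assumes "\<And>d. d \<in> D \<Longrightarrow> C d > 0"
  shows "\<bar>\<Sum>d\<in>D. x d / C d * y d\<bar> \<le> sqrt (\<Sum>d\<in>D. (x d)\<^sup>2 / C d) * sqrt (\<Sum>d\<in>D. (y d)\<^sup>2 / C d)"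
proof -
  let ?x = "\<lambda>d. x d / sqrt (C d)" and ?y = "\<lambda>d. y d / sqrt (C d)"
  have "(\<Sum>d\<in>D. x d / C d * y d) = (\<Sum>d\<in>D. ?x d * ?y d)"
    using assms by (intro sum.cong) (auto simp: less_imp_le)
  then have "\<bar>\<Sum>d\<in>D. x d / C d * y d\<bar> \<le> (\<Sum>d\<in>D. \<bar>?x d\<bar> * \<bar>?y d\<bar>)"
    by (simp add: order_trans[OF sum_abs] abs_mult)
  also have "\<dots> \<le> L2_set ?x D * L2_set ?y D"
    by (rule L2_set_mult_ineq)
  also have "\<dots> = sqrt (\<Sum>d\<in>D. (x d)\<^sup>2 / C d) * sqrt (\<Sum>d\<in>D. (y d)\<^sup>2 / C d)"
    unfolding L2_set_def using assms
    by (intro arg_cong2[where f = "(*)"] arg_cong[where f = sqrt] sum.cong)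
       (auto simp: power_divide less_imp_le)
  finally show ?thesis .
qed

lemma mahal_le_mahal_iff:
  assumes "\<And>d. d \<in> D \<Longrightarrow> C d > 0"
  shows "mahal D C x b \<le> mahal D C x a \<longleftrightarrow>
    (\<Sum>d\<in>D. (b d - a d) / C d * a d) + (\<Sum>d\<in>D. (b d - a d)\<^sup>2 / C d) / 2
      \<le> (\<Sum>d\<in>D. (b d - a d) / C d * x d)"
proof -
  have "mahal D C x b - mahal D C x a =
      2 * (\<Sum>d\<in>D. (b d - a d) / C d * a d + (b d - a d)\<^sup>2 / C d / 2 - (b d - a d) / C d * x d)"
    unfolding mahal_def sum_subtractf[symmetric] sum_distrib_left
  proof (intro sum.cong refl)
    fix d assume "d \<in> D"
    with assms have "C d > 0" by blast
    then show "(x d - b d)\<^sup>2 / C d - (x d - a d)\<^sup>2 / C d =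
        2 * ((b d - a d) / C d * a d + (b d - a d)\<^sup>2 / C d / 2 - (b d - a d) / C d * x d)"
      by (simp add: field_simps power2_eq_square)
  qed
  also have "\<dots> = 2 * ((\<Sum>d\<in>D. (b d - a d) / C d * a d) + (\<Sum>d\<in>D. (b d - a d)\<^sup>2 / C d) / 2
      - (\<Sum>d\<in>D. (b d - a d) / C d * x d))"
    by (simp add: sum.distrib sum_subtractf sum_divide_distrib)
  finally show ?thesis
    by argo
qed

lemma convex_comb_deviation_ge:
  fixes w A :: "'s \<Rightarrow> real"
  assumes "finite S" and w_nonneg: "\<And>m. m \<in> S \<Longrightarrow> w m \<ge> 0" and w_sum: "(\<Sum>m\<in>S. w m) = 1"
    and "\<And>m. m \<in> S \<Longrightarrow> P m \<Longrightarrow> A m = a"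
    and "\<And>m. m \<in> S \<Longrightarrow> \<not> P m \<Longrightarrow> a - A m \<ge> - B"
  shows "a - (\<Sum>m\<in>S. w m * A m) \<ge> - (1 - (\<Sum>m\<in>S. if P m then w m else 0)) * B"
proof -
  have "(\<Sum>m\<in>S. if P m then 0 else w m) = (\<Sum>m\<in>S. w m - (if P m then w m else 0))"
    by (rule sum.cong) auto
  then have "1 - (\<Sum>m\<in>S. if P m then w m else 0) = (\<Sum>m\<in>S. if P m then 0 else w m)"
    by (simp add: sum_subtractf w_sum)
  moreover have "(\<Sum>m\<in>S. (if P m then 0 else w m) * - B) \<le> (\<Sum>m\<in>S. w m * (a - A m))"
  proof (rule sum_mono)
    fix m assume "m \<in> S"
    then show "(if P m then 0 else w m) * - B \<le> w m * (a - A m)"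
      using assms(4,5)[of m] mult_left_mono[of "- B" "a - A m" "w m"] w_nonneg[of m] by auto
  qed
  moreover have "a - (\<Sum>m\<in>S. w m * A m) = (\<Sum>m\<in>S. w m * (a - A m))"
    by (simp add: right_diff_distrib sum_subtractf sum_distrib_right[symmetric] w_sum)
  ultimately show ?thesis
    by (simp add: sum_distrib_right sum_negf)
qed

lemma (in prob_space) prob_ge_union_bound:
  fixes q :: real
  assumes "finite J" and "A \<in> events" and "E ` J \<subseteq> events"
    and "space M - A \<subseteq> (\<Union>j\<in>J. E j)" and "\<And>j. j \<in> J \<Longrightarrow> prob (E j) \<le> q"
  shows "prob A \<ge> 1 - card J * q"
proof -
  have "prob (space M - A) \<le> prob (\<Union>j\<in>J. E j)"
    using assms by (intro finite_measure_mono) auto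
  also have "\<dots> \<le> (\<Sum>j\<in>J. prob (E j))"
    using assms by (intro finite_measure_subadditive_finite) auto
  also have "\<dots> \<le> card J * q"
    using sum_mono[of J "\<lambda>j. prob (E j)" "\<lambda>_. q"] assms by simp
  finally show ?thesis
    using prob_compl[OF \<open>A \<in> events\<close>] by simp
qed

locale gaussian_fusion = prob_space M for M :: "'a measure" +
  fixes L :: nat and mu :: "nat \<Rightarrow> nat \<Rightarrow> real" and C :: "nat \<Rightarrow> real" and Dt :: "nat set"
    and S :: "'s set" and w :: "'s \<Rightarrow> real" and l0 :: nat and I :: "'s \<Rightarrow> bool"
    and lm :: "'s \<Rightarrow> nat" and f :: "'s \<Rightarrow> 'a \<Rightarrow> nat \<Rightarrow> real"
  assumes finite_Dt: "finite Dt" and C_pos: "\<And>d. d \<in> Dt \<Longrightarrow> C d > 0"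
    and distinct: "\<And>l l'. l \<in> {1..L} \<Longrightarrow> l' \<in> {1..L} \<Longrightarrow> l \<noteq> l' \<Longrightarrow>
                     (\<lambda>d\<in>Dt. mu l d) \<noteq> (\<lambda>d\<in>Dt. mu l' d)"
    and finite_S: "finite S"
    and w_nonneg: "\<And>m. m \<in> S \<Longrightarrow> w m \<ge> 0" and w_sum: "(\<Sum>m\<in>S. w m) = 1"
    and l0: "l0 \<in> {1..L}"
    and lm: "\<And>m. m \<in> S \<Longrightarrow> \<not> I m \<Longrightarrow> lm m \<in> {1..L} \<and> lm m \<noteq> l0"
    and indep: "indep_vars (\<lambda>_. PiM Dt (\<lambda>_. borel)) (\<lambda>m \<omega>. \<lambda>d\<in>Dt. f m \<omega> d) S"
    and distr_sensor: "\<And>m. m \<in> S \<Longrightarrow>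
          distr M (PiM Dt (\<lambda>_. borel)) (\<lambda>\<omega>. \<lambda>d\<in>Dt. f m \<omega> d)
          = gauss_diag Dt (mu (if I m then l0 else lm m)) C"
begin

definition sensor_class :: "'s \<Rightarrow> nat" where
  "sensor_class m = (if I m then l0 else lm m)"

definition fused :: "'a \<Rightarrow> nat \<Rightarrow> real" where
  "fused \<omega> = (\<lambda>d. \<Sum>m\<in>S. w m * f m \<omega> d)"

definition rho :: real where
  "rho = (\<Sum>m\<in>S. if I m then w m else 0)"

definition eta :: real where
  "eta = (\<Sum>m\<in>S. (w m)\<^sup>2)"

definition G_min :: real where
  "G_min = Min {(\<Sum>d\<in>Dt. (mu l d - mu l' d)\<^sup>2 / C d) | l l'. l \<in> {1..L} \<and> l' \<in> {1..L} \<and> l \<noteq> l'}"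

definition delta_max :: real where
  "delta_max = Max {sqrt (\<Sum>d\<in>Dt. (mu l d)\<^sup>2 / C d) | l. l \<in> {1..L}}"

definition margin :: real where
  "margin = 1 / sqrt eta * (sqrt G_min / 2 - 2 * (1 - rho) * delta_max)"

lemma sensor_class_mem: "m \<in> S \<Longrightarrow> sensor_class m \<in> {1..L}"
  using l0 lm by (auto simp: sensor_class_def)

lemma ex_weight_nonzero: "\<exists>m\<in>S. w m \<noteq> 0"
proof (rule ccontr)
  assume "\<not> (\<exists>m\<in>S. w m \<noteq> 0)"
  then have "(\<Sum>m\<in>S. w m) = 0"
    by (intro sum.neutral) blast
  with w_sum show False
    by simp
qed

lemma eta_pos: "eta > 0"
proof -
  obtain m where "m \<in> S" "w m \<noteq> 0"
    using ex_weight_nonzero by blast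
  then show ?thesis
    unfolding eta_def by (intro sum_pos2[OF finite_S]) auto
qed

lemma G_min_le:
  assumes "l \<in> {1..L}" "l' \<in> {1..L}" "l \<noteq> l'"
  shows "G_min \<le> (\<Sum>d\<in>Dt. (mu l d - mu l' d)\<^sup>2 / C d)"
proof -
  let ?G = "{(\<Sum>d\<in>Dt. (mu l d - mu l' d)\<^sup>2 / C d) | l l'. l \<in> {1..L} \<and> l' \<in> {1..L} \<and> l \<noteq> l'}"
  have "?G \<subseteq> (\<lambda>(l, l'). \<Sum>d\<in>Dt. (mu l d - mu l' d)\<^sup>2 / C d) ` ({1..L} \<times> {1..L})"
    by auto
  then have "finite ?G"
    by (rule finite_subset) simp
  moreover have "(\<Sum>d\<in>Dt. (mu l d - mu l' d)\<^sup>2 / C d) \<in> ?G"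
    using assms by blast
  ultimately show ?thesis
    unfolding G_min_def by (rule Min_le)
qed

lemma abs_projection_le_delta_max:
  assumes "k \<in> {1..L}"
  shows "\<bar>\<Sum>d\<in>Dt. (b d - a d) / C d * mu k d\<bar> \<le> sqrt (\<Sum>d\<in>Dt. (b d - a d)\<^sup>2 / C d) * delta_max"
proof -
  have "\<bar>\<Sum>d\<in>Dt. (b d - a d) / C d * mu k d\<bar>
      \<le> sqrt (\<Sum>d\<in>Dt. (b d - a d)\<^sup>2 / C d) * sqrt (\<Sum>d\<in>Dt. (mu k d)\<^sup>2 / C d)"
    by (rule abs_sum_div_le_weighted_norms) (rule C_pos)
  also have "\<dots> \<le> sqrt (\<Sum>d\<in>Dt. (b d - a d)\<^sup>2 / C d) * delta_max"
    unfolding delta_max_def using assms C_pos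
    by (intro mult_left_mono Max_ge) (auto intro!: sum_nonneg divide_nonneg_pos)
  finally show ?thesis .
qed

lemma pairwise_distance_pos:
  assumes "l \<in> {1..L}" "l' \<in> {1..L}" "l \<noteq> l'"
  shows "(\<Sum>d\<in>Dt. (mu l d - mu l' d)\<^sup>2 / C d) > 0"
proof -
  obtain d where "d \<in> Dt" "mu l d \<noteq> mu l' d"
    using distinct[OF assms] by (metis restrict_ext)
  then show ?thesis
    using C_pos by (intro sum_pos2[OF finite_Dt, of d]) (auto intro: divide_nonneg_pos)
qed

lemma distributed_sensor_projection:
  assumes "m \<in> S" and "\<exists>d\<in>Dt. c d \<noteq> 0"
  shows "distributed M lborel (\<lambda>\<omega>. \<Sum>d\<in>Dt. c d * f m \<omega> d)
           (normal_density (\<Sum>d\<in>Dt. c d * mu (sensor_class m) d) (sqrt (\<Sum>d\<in>Dt. (c d)\<^sup>2 * C d)))"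
proof -
  let ?V = "\<lambda>\<omega>. \<lambda>d\<in>Dt. f m \<omega> d" and ?h = "\<lambda>x. \<Sum>d\<in>Dt. c d * x d"
  have V: "?V \<in> measurable M (PiM Dt (\<lambda>_. borel))"
    using indep assms(1) unfolding indep_vars_def by auto
  have h: "?h \<in> borel_measurable (PiM Dt (\<lambda>_. borel))"
    by measurable
  have proj: "(\<lambda>\<omega>. \<Sum>d\<in>Dt. c d * f m \<omega> d) = (\<lambda>\<omega>. ?h (?V \<omega>))"
    by simp
  have "distr M lborel (\<lambda>\<omega>. ?h (?V \<omega>)) = distr (distr M (PiM Dt (\<lambda>_. borel)) ?V) lborel ?h"
    using V h by (subst distr_distr) (auto simp: comp_def)
  also have "\<dots> = distr (gauss_diag Dt (mu (sensor_class m)) C) lborel ?h"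
    using distr_sensor[OF assms(1)] by (simp add: sensor_class_def)
  also have "\<dots> = density lborel
      (normal_density (\<Sum>d\<in>Dt. c d * mu (sensor_class m) d) (sqrt (\<Sum>d\<in>Dt. (c d)\<^sup>2 * C d)))"
    using distributed_gauss_diag_lin_comb[of Dt C c "mu (sensor_class m)"] finite_Dt C_pos assms(2)
    by (simp add: distributed_def)
  finally show ?thesis
    using measurable_comp[OF V h] unfolding proj distributed_def by (simp add: comp_def)
qed

lemma distributed_fused_projection:
  assumes c: "\<exists>d\<in>Dt. c d \<noteq> 0"
  shows "distributed M lborel (\<lambda>\<omega>. \<Sum>d\<in>Dt. c d * fused \<omega> d)
           (normal_density (\<Sum>m\<in>S. w m * (\<Sum>d\<in>Dt. c d * mu (sensor_class m) d))
              (sqrt eta * sqrt (\<Sum>d\<in>Dt. (c d)\<^sup>2 * C d)))"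
proof -
  let ?X = "\<lambda>m \<omega>. \<Sum>d\<in>Dt. c d * f m \<omega> d" and ?\<sigma> = "sqrt (\<Sum>d\<in>Dt. (c d)\<^sup>2 * C d)"
  have \<sigma>: "?\<sigma> > 0"
    using c C_pos by (auto intro!: sum_pos2[OF finite_Dt] simp: less_imp_le)
  have "indep_vars (\<lambda>_. borel) (\<lambda>m \<omega>. \<Sum>d\<in>Dt. c d * (\<lambda>d\<in>Dt. f m \<omega> d) d) S"
    by (rule indep_vars_compose2[OF indep]) measurable
  then have indep_X: "indep_vars (\<lambda>_. borel) ?X S"
    by simp
  from ex_weight_nonzero have dist: "distributed M lborel (\<lambda>\<omega>. \<Sum>m\<in>S. w m * ?X m \<omega>)
      (normal_density (\<Sum>m\<in>S. w m * (\<Sum>d\<in>Dt. c d * mu (sensor_class m) d)) (sqrt (\<Sum>m\<in>S. (w m * ?\<sigma>)\<^sup>2)))"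
    using \<sigma> c by (intro distributed_lin_comb_indep_normal[OF finite_S _ indep_X] distributed_sensor_projection)
  have swap: "(\<lambda>\<omega>. \<Sum>m\<in>S. w m * ?X m \<omega>) = (\<lambda>\<omega>. \<Sum>d\<in>Dt. c d * fused \<omega> d)"
    unfolding fused_def by (simp add: sum_distrib_left mult.left_commute) (rule ext, rule sum.swap)
  have std: "sqrt (\<Sum>m\<in>S. (w m * ?\<sigma>)\<^sup>2) = sqrt eta * ?\<sigma>"
    unfolding eta_def using \<sigma>
    by (simp add: power_mult_distrib sum_distrib_right[symmetric] real_sqrt_mult)
  show ?thesis
    using dist unfolding swap std .
qed

lemma margin_le_standardized_gap:
  assumes l: "l \<in> {1..L}" "l \<noteq> l0"
  defines "c \<equiv> \<lambda>d. (mu l d - mu l0 d) / C d"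
    and "G \<equiv> \<Sum>d\<in>Dt. (mu l d - mu l0 d)\<^sup>2 / C d"
  shows "margin \<le> ((\<Sum>d\<in>Dt. c d * mu l0 d) + G / 2
                    - (\<Sum>m\<in>S. w m * (\<Sum>d\<in>Dt. c d * mu (sensor_class m) d))) / (sqrt eta * sqrt G)"
proof -
  let ?A = "\<lambda>m. \<Sum>d\<in>Dt. c d * mu (sensor_class m) d" and ?a = "\<Sum>d\<in>Dt. c d * mu l0 d"
  have G_pos: "G > 0"
    unfolding G_def using l l0 by (intro pairwise_distance_pos) auto
  have bound: "\<bar>\<Sum>d\<in>Dt. c d * mu k d\<bar> \<le> sqrt G * delta_max" if "k \<in> {1..L}" for k
    unfolding c_def G_def by (rule abs_projection_le_delta_max[OF that])
  have dev: "?a - (\<Sum>m\<in>S. w m * ?A m) \<ge> - (1 - rho) * (2 * sqrt G * delta_max)"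
    unfolding rho_def
  proof (rule convex_comb_deviation_ge[OF finite_S w_nonneg w_sum])
    show "?A m = ?a" if "m \<in> S" "I m" for m
      using that by (simp add: sensor_class_def)
    show "?a - ?A m \<ge> - (2 * sqrt G * delta_max)" if "m \<in> S" "\<not> I m" for m
      using bound[OF sensor_class_mem[OF that(1)]] bound[OF l0] by linarith
  qed
  have "sqrt G * sqrt G_min \<le> sqrt G * sqrt G"
    unfolding G_def using G_min_le[OF l(1) l0 l(2)] G_pos[unfolded G_def] by (intro mult_left_mono) auto
  then have "sqrt G * sqrt G_min \<le> G"
    using G_pos by simp
  moreover have "margin * (sqrt eta * sqrt G)
      = sqrt G * sqrt G_min / 2 - (1 - rho) * (2 * sqrt G * delta_max)"
    using eta_pos by (simp add: margin_def field_simps)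
  ultimately have "margin * (sqrt eta * sqrt G) \<le> ?a + G / 2 - (\<Sum>m\<in>S. w m * ?A m)"
    using dev by linarith
  then show ?thesis
    using G_pos eta_pos by (simp add: pos_le_divide_eq)
qed

lemma pairwise_error_le_Qfun:
  assumes l: "l \<in> {1..L}" "l \<noteq> l0"
  defines "E \<equiv> {\<omega> \<in> space M. mahal Dt C (fused \<omega>) (mu l) \<le> mahal Dt C (fused \<omega>) (mu l0)}"
  shows "E \<in> events" and "prob E \<le> Qfun margin"
proof -
  define c where "c = (\<lambda>d. (mu l d - mu l0 d) / C d)"
  define G where "G = (\<Sum>d\<in>Dt. (mu l d - mu l0 d)\<^sup>2 / C d)"
  let ?Y = "\<lambda>\<omega>. \<Sum>d\<in>Dt. c d * fused \<omega> d"
  have G_pos: "G > 0"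
    unfolding G_def using l l0 by (intro pairwise_distance_pos) auto
  have G_eq: "(\<Sum>d\<in>Dt. (c d)\<^sup>2 * C d) = G"
    unfolding G_def c_def using C_pos by (intro sum.cong) (auto simp: power_divide power2_eq_square)
  have "\<exists>d\<in>Dt. c d \<noteq> 0"
  proof (rule ccontr)
    assume "\<not> (\<exists>d\<in>Dt. c d \<noteq> 0)"
    then have "(\<Sum>d\<in>Dt. (c d)\<^sup>2 * C d) = 0"
      by simp
    with G_eq G_pos show False
      by simp
  qed
  from distributed_fused_projection[OF this] have Y: "distributed M lborel ?Y
      (normal_density (\<Sum>m\<in>S. w m * (\<Sum>d\<in>Dt. c d * mu (sensor_class m) d)) (sqrt eta * sqrt G))"
    unfolding G_eq .
  have E_eq: "E = {\<omega> \<in> space M. (\<Sum>d\<in>Dt. c d * mu l0 d) + G / 2 \<le> ?Y \<omega>}"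
    unfolding E_def c_def G_def using mahal_le_mahal_iff[OF C_pos] by simp
  show "E \<in> events"
    unfolding E_eq using Y by (auto simp: distributed_def)
  show "prob E \<le> Qfun margin"
    unfolding E_eq
  proof (rule prob_normal_ge_le_Qfun[OF Y])
    show "sqrt eta * sqrt G > 0"
      using eta_pos G_pos by simp
    show "margin \<le> ((\<Sum>d\<in>Dt. c d * mu l0 d) + G / 2
        - (\<Sum>m\<in>S. w m * (\<Sum>d\<in>Dt. c d * mu (sensor_class m) d))) / (sqrt eta * sqrt G)"
      using margin_le_standardized_gap[OF l] unfolding c_def G_def .
  qed
qed

lemma prob_decision_correct_ge:
  assumes lhat_meas: "lhat \<in> measurable M (count_space UNIV)"
    and lhat_argmin: "\<And>\<omega>. \<omega> \<in> space M \<Longrightarrow> lhat \<omega> \<in> {1..L} \<and>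
          (\<forall>l\<in>{1..L}. mahal Dt C (fused \<omega>) (mu (lhat \<omega>)) \<le> mahal Dt C (fused \<omega>) (mu l))"
  shows "prob {\<omega> \<in> space M. lhat \<omega> = l0} \<ge> 1 - (real L - 1) * Qfun margin"
proof -
  let ?E = "\<lambda>l. {\<omega> \<in> space M. mahal Dt C (fused \<omega>) (mu l) \<le> mahal Dt C (fused \<omega>) (mu l0)}"
  have "{\<omega> \<in> space M. lhat \<omega> = l0} = lhat -` {l0} \<inter> space M"
    by auto
  then have correct_event: "{\<omega> \<in> space M. lhat \<omega> = l0} \<in> events"
    using measurable_sets[OF lhat_meas] by simp
  have cover: "space M - {\<omega> \<in> space M. lhat \<omega> = l0} \<subseteq> (\<Union>l\<in>{1..L} - {l0}. ?E l)"
  proof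
    fix \<omega> assume "\<omega> \<in> space M - {\<omega> \<in> space M. lhat \<omega> = l0}"
    then have "\<omega> \<in> ?E (lhat \<omega>)" "lhat \<omega> \<in> {1..L} - {l0}"
      using lhat_argmin[of \<omega>] l0 by auto
    then show "\<omega> \<in> (\<Union>l\<in>{1..L} - {l0}. ?E l)"
      by blast
  qed
  have "prob {\<omega> \<in> space M. lhat \<omega> = l0} \<ge> 1 - card ({1..L} - {l0}) * Qfun margin"
  proof (rule prob_ge_union_bound[OF _ correct_event _ cover])
    show "finite ({1..L} - {l0})"
      by simp
    show "?E ` ({1..L} - {l0}) \<subseteq> events"
      using pairwise_error_le_Qfun(1) by blast
    show "prob (?E l) \<le> Qfun margin" if "l \<in> {1..L} - {l0}" for l
      using pairwise_error_le_Qfun(2) that by blast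
  qed
  moreover have "real (card ({1..L} - {l0})) = real L - 1"
    using l0 by (simp add: of_nat_diff)
  ultimately show ?thesis
    by simp
qed

end

theorem theorem1:
  fixes M :: "'a measure"
    and L D :: nat
    and mu :: "nat \<Rightarrow> nat \<Rightarrow> real"
    and C :: "nat \<Rightarrow> real"
    and Dt :: "nat set"
    and S :: "'s set"
    and w :: "'s \<Rightarrow> real"
    and l0 :: nat
    and I :: "'s \<Rightarrow> bool"
    and lm :: "'s \<Rightarrow> nat"
    and f :: "'s \<Rightarrow> 'a \<Rightarrow> nat \<Rightarrow> real"
    and lhat :: "'a \<Rightarrow> nat"
  assumes "prob_space M"
    and "L \<ge> 2" and "D \<ge> 1"
    and C_pos: "\<And>d. d \<in> {1..D} \<Longrightarrow> C d > 0"
    and "Dt \<subseteq> {1..D}" and "Dt \<noteq> {}"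
    and distinct: "\<And>l l'. l \<in> {1..L} \<Longrightarrow> l' \<in> {1..L} \<Longrightarrow> l \<noteq> l' \<Longrightarrow>
                     (\<lambda>d\<in>Dt. mu l d) \<noteq> (\<lambda>d\<in>Dt. mu l' d)"
    and "finite S" and "S \<noteq> {}"
    and w_nonneg: "\<And>m. m \<in> S \<Longrightarrow> w m \<ge> 0"
    and w_sum: "(\<Sum>m\<in>S. w m) = 1"
    and l0: "l0 \<in> {1..L}"
    and lm: "\<And>m. m \<in> S \<Longrightarrow> \<not> I m \<Longrightarrow> lm m \<in> {1..L} \<and> lm m \<noteq> l0"
    and indep: "prob_space.indep_vars M (\<lambda>_. PiM Dt (\<lambda>_. borel))
                   (\<lambda>m \<omega>. \<lambda>d\<in>Dt. f m \<omega> d) S"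
    and distr: "\<And>m. m \<in> S \<Longrightarrow>
                  distr M (PiM Dt (\<lambda>_. borel)) (\<lambda>\<omega>. \<lambda>d\<in>Dt. f m \<omega> d)
                  = gauss_diag Dt (mu (if I m then l0 else lm m)) C"
    and lhat_meas: "lhat \<in> measurable M (count_space UNIV)"
    and lhat_argmin: "\<And>\<omega>. \<omega> \<in> space M \<Longrightarrow> lhat \<omega> \<in> {1..L} \<and>
         (\<forall>l\<in>{1..L}. mahal Dt C (\<lambda>d. \<Sum>m\<in>S. w m * f m \<omega> d) (mu (lhat \<omega>))
                       \<le> mahal Dt C (\<lambda>d. \<Sum>m\<in>S. w m * f m \<omega> d) (mu l))"
  shows "measure M {\<omega> \<in> space M. lhat \<omega> = l0}
    \<ge> 1 - (real L - 1) *
        Qfun (1 / sqrt (\<Sum>m\<in>S. (w m)^2) *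
          (sqrt (Min {(\<Sum>d\<in>Dt. (mu l d - mu l' d)^2 / C d) | l l'.
                        l \<in> {1..L} \<and> l' \<in> {1..L} \<and> l \<noteq> l'}) / 2
           - 2 * (1 - (\<Sum>m\<in>S. if I m then w m else 0))
               * Max {sqrt (\<Sum>d\<in>Dt. (mu l d)^2 / C d) | l. l \<in> {1..L}}))"
proof -
  interpret gaussian_fusion M L mu C Dt S w l0 I lm f
  proof (rule gaussian_fusion.intro[OF \<open>prob_space M\<close>], unfold_locales)
    show "finite Dt"
      using \<open>Dt \<subseteq> {1..D}\<close> finite_subset by blast
    show "C d > 0" if "d \<in> Dt" for d
      using C_pos that \<open>Dt \<subseteq> {1..D}\<close> by blast
  qed (use assms in blast)+
  show ?thesis
    using prob_decision_correct_ge[OF lhat_meas lhat_argmin[folded fused_def]]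
    unfolding margin_def G_min_def delta_max_def rho_def eta_def .
qed

end
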